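(* Let $r,m$ be positive integers, $n=2rm$, and let $f:\mathbb{F}_{2^n}\to\mathbb{F}_{2^n}$ be an almost-$(2^r+1)$-to-1 component-wise plateaued map with $f(0)=0$ such that $0$ is the unique element of $\mathrm{Im}(f)$ with exactly one preimage. Then $f$ has exactly $\frac{2^r}{2^r+1}(2^n-1)$ bent components and exactly $\frac{2^n-1}{2^r+1}$ plateaued components with amplitude $t=2r$. Moreover, for every $b\in\mathbb{F}_{2^n}^*$, \[W_f(b,0)\in\{(-1)^m2^{rm},\,(-1)^{m+1}2^{r(m+1)}\}.\]
   Context: $\mathrm{Tr}$ denotes the absolute trace $\mathbb{F}_{2^n}\to\mathbb{F}_2$. The Walsh transform is $W_f(b,a)=\sum_{x\in\mathbb{F}_{2^n}}(-1)^{\mathrm{Tr}(bf(x)+ax)}$. The component functions of $f$ are $x\mapsto\mathrm{Tr}(\lambda f(x))$, $\lambda\in\mathbb{F}_{2^n}^*$. The component for $\lambda$ is plateaued with amplitude $t\geq 0$ if $W_f(\lambda,a)\in\{0,\pm 2^{(n+t)/2}\}$ for all $a\in\mathbb{F}_{2^n}$; $f$ is component-wise plateaued if all its components are plateaued; for $n$ even a plateaued component with $t=0$ is called bent. $f$ is almost-$k$-to-1 if there is a unique element of $\mathrm{Im}(f)$ with exactly one preimage and every other element of $\mathrm{Im}(f)$ has exactly $k$ preimages. *)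

theory Defs
  imports Complex_Main
begin

text \<open>Finite field F_{2^n} is modelled by a finite field type 'a with CARD('a) = 2^n.
  The absolute trace F_{2^n} -> F_2 is Tr(x) = sum_{i<n} x^(2^i) (value 0 or 1 in 'a).\<close>

definition abs_trace :: "nat \<Rightarrow> 'a::field \<Rightarrow> 'a" where
  "abs_trace n x = (\<Sum>i<n. x ^ (2 ^ i))"

definition chi :: "nat \<Rightarrow> 'a::field \<Rightarrow> real" where
  "chi n y = (if abs_trace n y = 0 then 1 else -1)"

definition walsh :: "nat \<Rightarrow> ('a::{field,finite} \<Rightarrow> 'a) \<Rightarrow> 'a \<Rightarrow> 'a \<Rightarrow> real" where
  "walsh n f b a = (\<Sum>x\<in>UNIV. chi n (b * f x + a * x))"

definition plateaued_component :: "nat \<Rightarrow> ('a::{field,finite} \<Rightarrow> 'a) \<Rightarrow> 'a \<Rightarrow> nat \<Rightarrow> bool" where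
  "plateaued_component n f lam t \<longleftrightarrow>
     (\<forall>a. walsh n f lam a \<in> {0, 2 powr ((real n + real t) / 2), - (2 powr ((real n + real t) / 2))})"

definition bent_component :: "nat \<Rightarrow> ('a::{field,finite} \<Rightarrow> 'a) \<Rightarrow> 'a \<Rightarrow> bool" where
  "bent_component n f lam \<longleftrightarrow> plateaued_component n f lam 0"

definition componentwise_plateaued :: "nat \<Rightarrow> ('a::{field,finite} \<Rightarrow> 'a) \<Rightarrow> bool" where
  "componentwise_plateaued n f \<longleftrightarrow> (\<forall>lam. lam \<noteq> 0 \<longrightarrow> (\<exists>t. plateaued_component n f lam t))"

definition almost_k_to_1 :: "('a \<Rightarrow> 'b) \<Rightarrow> nat \<Rightarrow> bool" where
  "almost_k_to_1 f k \<longleftrightarrow>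
     (\<exists>!y. y \<in> range f \<and> card (f -` {y}) = 1) \<and>
     (\<forall>y \<in> range f. card (f -` {y}) \<noteq> 1 \<longrightarrow> card (f -` {y}) = k)"

end

theory Submission
  imports
    Defs
    "HOL-Computational_Algebra.Polynomial"
    "HOL-Computational_Algebra.Primes"
    "HOL-Number_Theory.Cong"
begin

text \<open>
  Write \<open>W b\<close> for \<open>W\<^sub>f(b, 0)\<close>. Orthogonality of the additive characters gives two
  moment identities over \<open>b \<noteq> 0\<close>: the values \<open>W b\<close> sum to \<open>0\<close>, and by the fibre sizes
  of \<open>f\<close> their squares sum to \<open>2\<^sup>r 2\<^sup>n (2\<^sup>n - 1)\<close>. Grouping \<open>W b\<close> by fibres shows
  \<open>W b \<equiv> 1 (mod 2\<^sup>r + 1)\<close>, while plateauedness makes \<open>\<bar>W b\<bar>\<close> a power of two with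
  exponent at least \<open>rm\<close>; together this forces \<open>W b = (-2\<^sup>r)\<^sup>i\<close> with \<open>i \<ge> m\<close>.
  For \<open>v = (-2\<^sup>r)\<^sup>m\<close> every \<open>(W b - v)(W b + 2\<^sup>r v)\<close> is then nonnegative, while the
  moment identities make these terms sum to zero, so \<open>W b \<in> {v, -2\<^sup>r v}\<close>. The first
  moment counts the two values, and \<open>\<bar>W b\<bar>\<close> tells bent components from those of
  amplitude \<open>2r\<close>.
\<close>

lemma of_nat_card_UNIV_eq_0: "of_nat (card (UNIV :: 'a::{ring_1,finite} set)) = (0::'a)"
proof -
  have "(\<Sum>y\<in>UNIV. y + 1) = (\<Sum>y\<in>UNIV. y :: 'a)"
    by (rule sum.reindex_bij_witness[of _ "\<lambda>y. y - 1" "\<lambda>y. y + 1"]) auto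
  then show ?thesis by (simp add: sum.distrib)
qed

lemma CHAR_eq_2_if_card_power_two:
  assumes "card (UNIV :: 'a::{field,finite} set) = 2 ^ n"
  shows "CHAR('a) = 2"
proof -
  have "CHAR('a) > 0" by (rule finite_imp_CHAR_pos) simp
  then have prime: "prime CHAR('a)" by (rule prime_CHAR_semidom)
  moreover have "CHAR('a) dvd 2 ^ n"
    using of_nat_card_UNIV_eq_0[where 'a='a] assms by (metis of_nat_eq_0_iff_char_dvd)
  ultimately have "CHAR('a) dvd 2" using prime_dvd_power by blast
  with prime show ?thesis by (simp add: primes_dvd_imp_eq)
qed

lemma power_card_eq_same:
  fixes x :: "'a::{field,finite}"
  shows "x ^ card (UNIV :: 'a set) = x"
proof (cases "x = 0")
  case False
  have "(\<Prod>y\<in>UNIV - {0}. x * y) = (\<Prod>y\<in>UNIV - {0}. y)"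
    by (rule prod.reindex_bij_witness[of _ "\<lambda>y. y / x" "\<lambda>y. x * y"]) (use False in auto)
  then have "x ^ (card (UNIV :: 'a set) - 1) = 1"
    by (simp add: prod.distrib card_Diff_singleton)
  moreover have "card (UNIV :: 'a set) = Suc (card (UNIV :: 'a set) - 1)"
    using finite_UNIV_card_ge_0[where 'a='a] by simp
  ultimately show ?thesis by (metis power_Suc2 mult_1)
qed (simp add: finite_UNIV_card_ge_0)

lemma abs_trace_add:
  assumes "CHAR('a::field) = 2"
  shows "abs_trace n (x + y :: 'a) = abs_trace n x + abs_trace n y"
  unfolding abs_trace_def
  by (simp add: freshmans_dream'[where 'a='a] assms sum.distrib)

lemma abs_trace_eq_0_or_1:
  assumes "card (UNIV :: 'a::{field,finite} set) = 2 ^ n"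
  shows "abs_trace n (x::'a) = 0 \<or> abs_trace n x = 1"
proof -
  have char: "CHAR('a) = 2" using assms by (rule CHAR_eq_2_if_card_power_two)
  have "abs_trace n x ^ 2 = (\<Sum>i<n. x ^ 2 ^ Suc i)"
    unfolding abs_trace_def
    by (simp add: freshmans_dream_sum'[where n=1] char power_mult[symmetric] mult.commute)
  also have "\<dots> = abs_trace n x"
  proof -
    have "(\<Sum>i<Suc n. x ^ 2 ^ i) = x + (\<Sum>i<n. x ^ 2 ^ Suc i)"
      by (subst sum.lessThan_Suc_shift) simp
    moreover have "x ^ 2 ^ n = x" using power_card_eq_same[of x] assms by simp
    ultimately show ?thesis by (simp add: abs_trace_def add.commute)
  qed
  finally have "abs_trace n x * (abs_trace n x - 1) = 0"
    by (simp add: power2_eq_square algebra_simps)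
  then show ?thesis by simp
qed

lemma ex_abs_trace_neq_0:
  assumes card: "card (UNIV :: 'a::{field,finite} set) = 2 ^ n"
  shows "\<exists>a::'a. abs_trace n a \<noteq> 0"
proof -
  have "card {0::'a, 1} \<le> card (UNIV :: 'a set)" by (rule card_mono) auto
  with card have "n > 0" by (cases n) simp_all
  define p :: "'a poly" where "p = (\<Sum>i<n. monom 1 (2 ^ i))"
  have poly_p: "poly p x = abs_trace n x" for x
    unfolding p_def abs_trace_def by (simp add: poly_sum poly_monom)
  have "coeff p (2 ^ (n - 1)) = (\<Sum>i<n. if i = n - 1 then 1 else 0)"
    unfolding p_def coeff_sum coeff_monom by (rule sum.cong) auto
  with \<open>n > 0\<close> have "p \<noteq> 0" by auto
  have "degree p \<le> 2 ^ (n - 1)"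
    unfolding p_def by (rule degree_sum_le) (auto intro: order.trans[OF degree_monom_le] power_increasing)
  with card_poly_roots_bound[OF \<open>p \<noteq> 0\<close>] have "card {x. poly p x = 0} \<le> 2 ^ (n - 1)"
    by linarith
  also have "\<dots> < card (UNIV :: 'a set)" using card \<open>n > 0\<close> by simp
  finally have "{x. poly p x = 0} \<noteq> UNIV" by auto
  then show ?thesis by (auto simp: poly_p)
qed

lemma chi_0 [simp]: "chi n 0 = 1"
  by (simp add: chi_def abs_trace_def zero_power)

lemma chi_add:
  assumes "card (UNIV :: 'a::{field,finite} set) = 2 ^ n"
  shows "chi n (x + y :: 'a) = chi n x * chi n y"
proof -
  have "(1::'a) + 1 = 0"
    using CHAR_eq_2_if_card_power_two[OF assms] of_nat_CHAR[where 'a='a] by simp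
  then show ?thesis
    using abs_trace_eq_0_or_1[OF assms, of x] abs_trace_eq_0_or_1[OF assms, of y]
    unfolding chi_def abs_trace_add[OF CHAR_eq_2_if_card_power_two[OF assms]] by auto
qed

lemma sum_chi_mult:
  assumes card: "card (UNIV :: 'a::{field,finite} set) = 2 ^ n"
  shows "(\<Sum>b\<in>UNIV. chi n (b * c :: 'a)) = (if c = 0 then 2 ^ n else 0)"
proof (cases "c = 0")
  case False
  obtain a :: 'a where "abs_trace n a \<noteq> 0" using ex_abs_trace_neq_0[OF card] by blast
  then have chi_a: "chi n a = -1" by (simp add: chi_def)
  have "(\<Sum>b\<in>UNIV. chi n (b :: 'a)) = (\<Sum>b\<in>UNIV. chi n (b + a))"
    by (rule sum.reindex_bij_witness[where i="\<lambda>b. b + a" and j="\<lambda>b. b - a"]) auto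
  also have "\<dots> = - (\<Sum>b\<in>UNIV. chi n (b :: 'a))"
    by (simp add: chi_add[OF card] chi_a sum_negf)
  finally have "(\<Sum>b\<in>UNIV. chi n (b :: 'a)) = 0" by simp
  moreover have "(\<Sum>b\<in>UNIV. chi n (b * c)) = (\<Sum>b\<in>UNIV. chi n (b :: 'a))"
    by (rule sum.reindex_bij_witness[where i="\<lambda>y. y / c" and j="\<lambda>b. b * c"]) (use False in auto)
  ultimately show ?thesis using False by simp
qed (use card in simp)

lemma walsh_zero_eq_sum_fibres:
  "walsh n f b 0 = (\<Sum>y\<in>UNIV. real (card (f -` {y})) * chi n (b * y))"
proof -
  have "walsh n f b 0 = (\<Sum>x\<in>UNIV. chi n (b * f x))" by (simp add: walsh_def)
  also have "\<dots> = (\<Sum>y\<in>UNIV. real (card {x \<in> UNIV. f x = y}) * chi n (b * y))"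
    by (rule sum_fun_comp) auto
  finally show ?thesis by (simp add: vimage_def)
qed

lemma walsh_0_0:
  fixes f :: "'a::{field,finite} \<Rightarrow> 'a"
  shows "walsh n f 0 0 = real (card (UNIV :: 'a set))"
  by (simp add: walsh_def)

lemma sum_walsh_zero:
  assumes card: "card (UNIV :: 'a::{field,finite} set) = 2 ^ n"
  shows "(\<Sum>b\<in>UNIV. walsh n f b 0) = 2 ^ n * real (card (f -` {0 :: 'a}))"
proof -
  have "(\<Sum>b\<in>UNIV. walsh n f b 0) = (\<Sum>b\<in>UNIV. \<Sum>x\<in>UNIV. chi n (b * f x))"
    by (simp add: walsh_def)
  also have "\<dots> = (\<Sum>x\<in>UNIV. \<Sum>b\<in>UNIV. chi n (b * f x))"
    by (rule sum.swap)
  also have "\<dots> = (\<Sum>x\<in>UNIV. if f x = 0 then 2 ^ n else 0)"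
    by (simp add: sum_chi_mult[OF card])
  also have "\<dots> = (\<Sum>x\<in>f -` {0}. 2 ^ n)"
    by (rule sum.mono_neutral_cong_right) auto
  finally show ?thesis by simp
qed

lemma sum_walsh_zero_square:
  assumes card: "card (UNIV :: 'a::{field,finite} set) = 2 ^ n"
  shows "(\<Sum>b\<in>UNIV. (walsh n f b 0)\<^sup>2) = 2 ^ n * (\<Sum>x\<in>UNIV. real (card (f -` {f x :: 'a})))"
proof -
  have "(walsh n f b 0)\<^sup>2 = (\<Sum>x\<in>UNIV. \<Sum>y\<in>UNIV. chi n (b * (f x + f y)))" for b
    unfolding walsh_def power2_eq_square sum_product
    by (simp add: distrib_left chi_add[OF card])
  then have "(\<Sum>b\<in>UNIV. (walsh n f b 0)\<^sup>2)
      = (\<Sum>b\<in>UNIV. \<Sum>x\<in>UNIV. \<Sum>y\<in>UNIV. chi n (b * (f x + f y)))"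
    by simp
  also have "\<dots> = (\<Sum>x\<in>UNIV. \<Sum>b\<in>UNIV. \<Sum>y\<in>UNIV. chi n (b * (f x + f y)))"
    by (rule sum.swap)
  also have "\<dots> = (\<Sum>x\<in>UNIV. \<Sum>y\<in>UNIV. \<Sum>b\<in>UNIV. chi n (b * (f x + f y)))"
    by (rule sum.cong[OF refl], rule sum.swap)
  also have "\<dots> = (\<Sum>x\<in>UNIV. \<Sum>y\<in>UNIV. if f y = f x then 2 ^ n else 0)"
  proof -
    have "u + v = 0 \<longleftrightarrow> v = u" for u v :: 'a
      using add_eq_0_iff2[of u v] uminus_CHAR_2[OF CHAR_eq_2_if_card_power_two[OF card], of u] by auto
    then show ?thesis by (simp add: sum_chi_mult[OF card])
  qed
  also have "\<dots> = (\<Sum>x\<in>UNIV. \<Sum>y\<in>f -` {f x}. 2 ^ n)"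
    by (intro sum.cong refl sum.mono_neutral_cong_right) auto
  finally show ?thesis by (simp add: sum_distrib_left mult.commute)
qed

lemma walsh_zero_eq_1_plus_multiple:
  fixes f :: "'a::{field,finite} \<Rightarrow> 'a"
  assumes card_0: "card (f -` {0}) = 1"
    and card_y: "\<And>y. y \<in> range f \<Longrightarrow> y \<noteq> 0 \<Longrightarrow> card (f -` {y}) = k"
  shows "\<exists>S::int. walsh n f b 0 = 1 + real k * of_int S"
proof -
  have "walsh n f b 0 = 1 + (\<Sum>y\<in>UNIV - {0}. real (card (f -` {y})) * chi n (b * y))"
    unfolding walsh_zero_eq_sum_fibres by (subst sum.remove[of _ 0]) (simp_all add: card_0)
  also have "(\<Sum>y\<in>UNIV - {0}. real (card (f -` {y})) * chi n (b * y))
      = (\<Sum>y\<in>range f - {0}. real k * chi n (b * y))"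
    by (rule sum.mono_neutral_cong_right) (auto simp: card_y vimage_singleton_eq)
  finally have walsh: "walsh n f b 0 = 1 + real k * (\<Sum>y\<in>range f - {0}. chi n (b * y))"
    by (simp add: sum_distrib_left)
  have "(\<Sum>y\<in>range f - {0}. chi n (b * y)) \<in> \<int>"
    by (intro Ints_sum) (auto simp: chi_def)
  then obtain S where "(\<Sum>y\<in>range f - {0}. chi n (b * y)) = of_int S"
    by (rule Ints_cases)
  with walsh show ?thesis by auto
qed

lemma plateaued_component_walsh_square:
  assumes "plateaued_component n f b t" and "walsh n f b a \<noteq> 0"
  shows "(walsh n f b a)\<^sup>2 = 2 ^ (n + t)"
proof -
  have "(2 powr ((real n + real t) / 2))\<^sup>2 = (2::real) powr real (n + t)"
    by (simp add: power2_eq_square powr_add[symmetric])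
  also have "\<dots> = 2 ^ (n + t)" by (rule powr_realpow) simp
  finally have "(2 powr ((real n + real t) / 2))\<^sup>2 = (2::real) ^ (n + t)" .
  with assms show ?thesis
    unfolding plateaued_component_def by auto
qed

lemma plateaued_component_iff_walsh_square:
  assumes "plateaued_component n f b t\<^sub>0" and "walsh n f b a \<noteq> 0"
  shows "plateaued_component n f b t \<longleftrightarrow> (walsh n f b a)\<^sup>2 = 2 ^ (n + t)"
proof
  assume "(walsh n f b a)\<^sup>2 = 2 ^ (n + t)"
  moreover have "(walsh n f b a)\<^sup>2 = 2 ^ (n + t\<^sub>0)"
    using plateaued_component_walsh_square assms by blast
  ultimately have "t = t\<^sub>0" by simp
  with assms(1) show "plateaued_component n f b t" by simp
qed (use plateaued_component_walsh_square assms(2) in blast)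

lemma int_square_eq_power_two:
  fixes w :: int
  assumes "w\<^sup>2 = 2 ^ s"
  shows "\<exists>j. s = 2 * j \<and> \<bar>w\<bar> = 2 ^ j"
proof -
  have "int (nat \<bar>w\<bar> ^ 2) = int (2 ^ s)"
    using assms by (simp add: power2_abs)
  then have "nat \<bar>w\<bar> ^ 2 = 2 ^ s"
    by (simp only: of_nat_eq_iff)
  then obtain j where j: "nat \<bar>w\<bar> = 2 ^ j"
    using divides_primepow_nat[of 2 "nat \<bar>w\<bar>" s]
    by (metis dvd_triv_left power2_eq_square two_is_prime_nat)
  with \<open>nat \<bar>w\<bar> ^ 2 = 2 ^ s\<close> have "s = 2 * j"
    by (simp add: power_mult[symmetric] mult.commute)
  with j show ?thesis by (intro exI[of _ j]) (simp add: nat_eq_iff)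
qed

lemma signed_power_two_cong_1:
  fixes \<tau> :: int
  assumes "\<bar>\<tau>\<bar> = 1" and "s < r" and "[\<tau> * 2 ^ s = 1] (mod 2 ^ r + 1)"
  shows "\<tau> = 1 \<and> s = 0"
proof -
  have small: "\<bar>\<tau> * 2 ^ s - 1\<bar> < 2 ^ r + 1"
  proof -
    have "\<bar>\<tau> * 2 ^ s - 1\<bar> \<le> 2 ^ s + 1"
      using \<open>\<bar>\<tau>\<bar> = 1\<close> by (cases "\<tau> \<ge> 0") (auto simp: abs_if)
    moreover have "(2::int) ^ s < 2 ^ r" using \<open>s < r\<close> by simp
    ultimately show ?thesis by linarith
  qed
  have "\<tau> * 2 ^ s = 1"
  proof (rule ccontr)
    assume "\<tau> * 2 ^ s \<noteq> 1"
    moreover have "(2 ^ r + 1) dvd \<tau> * 2 ^ s - 1"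
      using assms(3) by (simp add: cong_iff_dvd_diff)
    ultimately have "\<bar>2 ^ r + 1\<bar> \<le> \<bar>\<tau> * 2 ^ s - 1\<bar>"
      by (intro dvd_imp_le_int) simp_all
    with small show False by simp
  qed
  moreover have "\<tau> = 1 \<or> \<tau> = -1" using \<open>\<bar>\<tau>\<bar> = 1\<close> by auto
  moreover have "(0::int) < 2 ^ s" by simp
  ultimately have "\<tau> = 1" by fastforce
  with \<open>\<tau> * 2 ^ s = 1\<close> have "(2::int) ^ s = 1" by simp
  then have "s = 0" by (metis power_inject_exp power_0 one_less_numeral_iff semiring_norm(76))
  with \<open>\<tau> = 1\<close> show ?thesis by simp
qed

lemma abs_eq_power_two_cong_1:
  fixes w :: int
  assumes "r > 0" and "[w = 1] (mod 2 ^ r + 1)" and "\<bar>w\<bar> = 2 ^ j"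
  shows "\<exists>i. j = r * i \<and> w = (- (2 ^ r)) ^ i"
proof -
  define i s where "i = j div r" and "s = j mod r"
  have j: "j = r * i + s" and "s < r"
    using \<open>r > 0\<close> by (simp_all add: i_def s_def)
  (* As 2^r = -1 modulo 2^r + 1, the factor (-2^r)^i of w below is congruent to 1. *)
  define \<tau> where "\<tau> = sgn w * (-1) ^ i"
  have "w \<noteq> 0" using \<open>\<bar>w\<bar> = 2 ^ j\<close> by auto
  then have "\<bar>\<tau>\<bar> = 1" by (simp add: \<tau>_def abs_mult power_abs)
  have "(- (2 ^ r)) ^ i = (-1) ^ i * (2::int) ^ (r * i)"
    by (metis mult_minus1 power_mult_distrib power_mult)
  then have "\<tau> * (- (2 ^ r)) ^ i * 2 ^ s = sgn w * ((-1) ^ i * (-1) ^ i) * (2 ^ (r * i) * 2 ^ s)"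
    by (simp only: \<tau>_def mult_ac)
  also have "\<dots> = sgn w * \<bar>w\<bar>"
    by (simp add: \<open>\<bar>w\<bar> = 2 ^ j\<close> j power_add)
  finally have w: "w = \<tau> * (- (2 ^ r)) ^ i * 2 ^ s" by (simp add: sgn_mult_abs)
  have "[- (2 ^ r) = 1] (mod (2::int) ^ r + 1)"
  proof -
    have "- (2 ^ r) - 1 = - (2 ^ r + 1 :: int)" by simp
    then show ?thesis unfolding cong_iff_dvd_diff by (simp only: dvd_minus_iff dvd_refl)
  qed
  then have "[(- (2 ^ r)) ^ i = 1] (mod (2::int) ^ r + 1)"
    using cong_pow by (metis power_one)
  then have "[w = \<tau> * 2 ^ s] (mod 2 ^ r + 1)"
    unfolding w by (metis cong_mult cong_refl mult_1_right)
  then have "[\<tau> * 2 ^ s = 1] (mod 2 ^ r + 1)"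
    using assms(2) cong_sym cong_trans by blast
  with \<open>\<bar>\<tau>\<bar> = 1\<close> \<open>s < r\<close> have "\<tau> = 1" and "s = 0"
    using signed_power_two_cong_1 by blast+
  with j w show ?thesis by auto
qed

lemma neg_power_quadratic_nonneg:
  fixes u :: real
  assumes "u \<ge> 2"
  shows "0 \<le> ((- u) ^ d - 1) * ((- u) ^ d + u)"
proof (cases "d \<le> 1")
  case True
  then show ?thesis by (cases d) auto
next
  case False
  have "u * u \<le> u ^ d"
    using False \<open>u \<ge> 2\<close> power_increasing[of 2 d u] by (simp add: power2_eq_square)
  moreover have "2 * u \<le> u * u" using \<open>u \<ge> 2\<close> by (intro mult_right_mono) auto
  ultimately have big: "u + 1 < u ^ d" using \<open>u \<ge> 2\<close> by linarith
  show ?thesis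
  proof (cases "even d")
    case True
    have "0 \<le> u ^ d - 1" "0 \<le> u ^ d + u" using big \<open>u \<ge> 2\<close> by linarith+
    with True show ?thesis by simp
  next
    case False
    then have "((- u) ^ d - 1) * ((- u) ^ d + u) = (u ^ d + 1) * (u ^ d - u)"
      by (simp add: algebra_simps)
    moreover have "0 \<le> u ^ d + 1" "0 \<le> u ^ d - u" using big \<open>u \<ge> 2\<close> by linarith+
    ultimately show ?thesis by simp
  qed
qed

lemma two_values_if_moments:
  fixes w :: "'b \<Rightarrow> real"
  assumes "finite B" and "u \<ge> 2"
    and powers: "\<And>b. b \<in> B \<Longrightarrow> \<exists>d. w b = v * (- u) ^ d"
    and sum_w: "(\<Sum>b\<in>B. w b) = 0"
    and sum_w_square: "(\<Sum>b\<in>B. (w b)\<^sup>2) = u * v\<^sup>2 * real (card B)"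
    and "b \<in> B"
  shows "w b = v \<or> w b = - u * v"
proof -
  define q where "q b = (w b - v) * (w b + u * v)" for b
  have "q b = (w b)\<^sup>2 + (u - 1) * v * w b - u * v\<^sup>2" for b
    by (simp add: q_def power2_eq_square algebra_simps)
  then have "(\<Sum>b\<in>B. q b)
      = (\<Sum>b\<in>B. (w b)\<^sup>2) + (u - 1) * v * (\<Sum>b\<in>B. w b) - real (card B) * (u * v\<^sup>2)"
    by (simp add: sum_subtractf sum.distrib sum_distrib_left)
  then have "(\<Sum>b\<in>B. q b) = 0" by (simp add: sum_w sum_w_square)
  moreover have "0 \<le> q b" if b: "b \<in> B" for b
  proof -
    obtain d where "w b = v * (- u) ^ d" using powers[OF b] by blast
    then have "q b = v\<^sup>2 * (((- u) ^ d - 1) * ((- u) ^ d + u))"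
      by (simp add: q_def power2_eq_square algebra_simps)
    then show ?thesis using neg_power_quadratic_nonneg[OF \<open>u \<ge> 2\<close>] by simp
  qed
  ultimately have "q b = 0" using sum_nonneg_eq_0_iff[OF \<open>finite B\<close>] \<open>b \<in> B\<close> by blast
  then show ?thesis by (simp add: q_def add_eq_0_iff2)
qed

lemma card_two_values_if_sum_eq_0:
  fixes w :: "'b \<Rightarrow> real"
  assumes "finite B" and "u > 0" and "v \<noteq> 0"
    and two_values: "\<And>b. b \<in> B \<Longrightarrow> w b = v \<or> w b = - u * v"
    and sum_w: "(\<Sum>b\<in>B. w b) = 0"
  shows "real (card {b \<in> B. w b = v}) = u / (u + 1) * real (card B)"
    and "real (card {b \<in> B. w b = - u * v}) = real (card B) / (u + 1)"
proof -
  define P N where "P = {b \<in> B. w b = v}" and "N = {b \<in> B. w b = - u * v}"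
  have "v - (- u * v) = (1 + u) * v" by (simp add: algebra_simps)
  moreover have "(1 + u) * v \<noteq> 0" using \<open>u > 0\<close> \<open>v \<noteq> 0\<close> by simp
  ultimately have "v - (- u * v) \<noteq> 0" by simp
  then have "v \<noteq> - u * v" by simp
  then have disjoint: "P \<inter> N = {}" by (auto simp: P_def N_def)
  have B: "B = P \<union> N" using two_values by (auto simp: P_def N_def)
  have fin: "finite P" "finite N" using \<open>finite B\<close> by (simp_all add: P_def N_def)
  have "0 = (\<Sum>b\<in>P. w b) + (\<Sum>b\<in>N. w b)"
    using sum_w sum.union_disjoint[OF fin disjoint, of w] B by simp
  also have "\<dots> = (\<Sum>b\<in>P. v) + (\<Sum>b\<in>N. - u * v)"
    by (intro arg_cong2[where f="(+)"] sum.cong) (auto simp: P_def N_def)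
  also have "\<dots> = v * (real (card P) - u * real (card N))"
    by (simp add: algebra_simps)
  finally have "real (card P) = u * real (card N)" using \<open>v \<noteq> 0\<close> by simp
  moreover have "real (card B) = real (card P) + real (card N)"
    using card_Un_disjoint[OF fin disjoint] B by simp
  ultimately show "real (card P) = u / (u + 1) * real (card B)"
    and "real (card N) = real (card B) / (u + 1)"
    using \<open>u > 0\<close> by (simp_all add: field_simps)
qed

lemma almost_k_to_1_card_vimage:
  assumes "almost_k_to_1 f k" and "card (f -` {z}) = 1"
    and "y \<in> range f" and "y \<noteq> z"
  shows "card (f -` {y}) = k"
proof -
  have "z \<in> range f" using \<open>card (f -` {z}) = 1\<close> by (auto simp: card_1_singleton_iff)
  with assms have "card (f -` {y}) \<noteq> 1"
    unfolding almost_k_to_1_def by blast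
  with assms show ?thesis unfolding almost_k_to_1_def by blast
qed

locale plateaued_almost_to_one =
  fixes f :: "'a::{field,finite} \<Rightarrow> 'a" and r m n :: nat
  assumes r_pos: "r > 0" and n_eq: "n = 2 * r * m"
    and card_UNIV: "card (UNIV :: 'a set) = 2 ^ n"
    and almost: "almost_k_to_1 f (2 ^ r + 1)"
    and plateaued: "componentwise_plateaued n f"
    and card_vimage_0: "card (f -` {0}) = 1"
begin

lemma card_vimage_nonzero: "y \<in> range f \<Longrightarrow> y \<noteq> 0 \<Longrightarrow> card (f -` {y}) = 2 ^ r + 1"
  by (rule almost_k_to_1_card_vimage[OF almost card_vimage_0])

lemma card_UNIV_minus_zero: "real (card (UNIV - {0 :: 'a})) = 2 ^ n - 1"
  by (simp add: card_Diff_singleton card_UNIV of_nat_diff)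

lemma sum_walsh_zero_nonzero: "(\<Sum>b\<in>UNIV - {0}. walsh n f b 0) = 0"
  using sum_walsh_zero[OF card_UNIV, of f] sum.remove[of UNIV 0 "\<lambda>b. walsh n f b 0"]
  by (simp add: card_vimage_0 walsh_0_0 card_UNIV)

lemma sum_walsh_zero_square_nonzero:
  "(\<Sum>b\<in>UNIV - {0}. (walsh n f b 0)\<^sup>2) = 2 ^ r * 2 ^ n * (2 ^ n - 1)"
proof -
  have "(\<Sum>x\<in>UNIV. real (card (f -` {f x})))
      = (\<Sum>x\<in>f -` {0}. real (card (f -` {f x})))
        + (\<Sum>x\<in>UNIV - f -` {0}. real (card (f -` {f x})))"
    by (simp add: sum.subset_diff[of "f -` {0}" UNIV])
  also have "\<dots> = 1 + (2 ^ n - 1) * (2 ^ r + 1)"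
    using card_vimage_nonzero card_vimage_0 card_UNIV
    by (simp add: card_Diff_subset of_nat_diff)
  finally have "(\<Sum>b\<in>UNIV. (walsh n f b 0)\<^sup>2) = 2 ^ n * (1 + (2 ^ n - 1) * (2 ^ r + 1))"
    using sum_walsh_zero_square[OF card_UNIV, of f] by simp
  then show ?thesis
    using sum.remove[of UNIV 0 "\<lambda>b. (walsh n f b 0)\<^sup>2"]
    by (simp add: walsh_0_0 card_UNIV algebra_simps power2_eq_square)
qed

lemma walsh_zero_eq_power:
  assumes "b \<noteq> 0"
  shows "\<exists>i\<ge>m. walsh n f b 0 = (- (2 ^ r)) ^ i"
proof -
  obtain S :: int where S: "walsh n f b 0 = 1 + real (2 ^ r + 1) * of_int S"
    using walsh_zero_eq_1_plus_multiple[OF card_vimage_0 card_vimage_nonzero] by blast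
  define w :: int where "w = 1 + (2 ^ r + 1) * S"
  have walsh_w: "walsh n f b 0 = of_int w" by (simp add: S w_def)
  have cong: "[w = 1] (mod 2 ^ r + 1)" by (simp add: w_def cong_iff_dvd_diff)
  have "w \<noteq> 0"
  proof
    assume "w = 0"
    with cong have "(2 ^ r + 1 :: int) dvd 1" by (simp add: cong_iff_dvd_diff)
    then show False by simp
  qed
  obtain t where "plateaued_component n f b t"
    using plateaued \<open>b \<noteq> 0\<close> unfolding componentwise_plateaued_def by blast
  moreover have "walsh n f b 0 \<noteq> 0" using \<open>w \<noteq> 0\<close> walsh_w by simp
  ultimately have "(walsh n f b 0)\<^sup>2 = 2 ^ (n + t)"
    by (rule plateaued_component_walsh_square)
  then have "w\<^sup>2 = 2 ^ (n + t)"
    unfolding walsh_w by (metis of_int_eq_iff of_int_numeral of_int_power)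
  then obtain j where j: "n + t = 2 * j" and "\<bar>w\<bar> = 2 ^ j"
    using int_square_eq_power_two by blast
  then obtain i where "j = r * i" and w: "w = (- (2 ^ r)) ^ i"
    using abs_eq_power_two_cong_1[OF r_pos cong] by blast
  have "2 * (r * m) \<le> 2 * (r * i)"
    using j \<open>j = r * i\<close> n_eq by (simp only: mult.assoc)
  with r_pos have "m \<le> i" by simp
  with w walsh_w show ?thesis by auto
qed

lemma square_neg_power_two:
  shows "((- (2 ^ r)) ^ m)\<^sup>2 = (2::real) ^ n"
    and "(- (2 ^ r) * (- (2 ^ r)) ^ m)\<^sup>2 = (2::real) ^ (n + 2 * r)"
  by (simp_all add: n_eq power_mult_distrib power_add flip: power_mult, simp_all add: ac_simps)

lemma walsh_zero_cases:
  assumes "b \<noteq> 0"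
  shows "walsh n f b 0 = (- (2 ^ r)) ^ m \<or> walsh n f b 0 = - (2 ^ r) * (- (2 ^ r)) ^ m"
proof (rule two_values_if_moments[where B="UNIV - {0}" and w="\<lambda>b. walsh n f b 0"])
  show "(2::real) \<le> 2 ^ r" using power_increasing[of 1 r "2::real"] r_pos by simp
  show "\<exists>d. walsh n f b 0 = (- (2 ^ r)) ^ m * (- (2 ^ r)) ^ d" if "b \<in> UNIV - {0}" for b
  proof -
    from that obtain i where "m \<le> i" and "walsh n f b 0 = (- (2 ^ r)) ^ i"
      using walsh_zero_eq_power by blast
    then have "walsh n f b 0 = (- (2 ^ r)) ^ (m + (i - m))" by simp
    then have "walsh n f b 0 = (- (2 ^ r)) ^ m * (- (2 ^ r)) ^ (i - m)"
      by (simp only: power_add)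
    then show ?thesis ..
  qed
qed (use assms sum_walsh_zero_nonzero sum_walsh_zero_square_nonzero square_neg_power_two(1)
    card_UNIV_minus_zero in auto)

lemma walsh_zero_square_iff_plateaued:
  assumes "b \<noteq> 0"
  shows "plateaued_component n f b t \<longleftrightarrow> (walsh n f b 0)\<^sup>2 = 2 ^ (n + t)"
proof -
  obtain t\<^sub>0 where "plateaued_component n f b t\<^sub>0"
    using plateaued \<open>b \<noteq> 0\<close> unfolding componentwise_plateaued_def by blast
  moreover have "walsh n f b 0 \<noteq> 0"
    using walsh_zero_cases[OF assms] by auto
  ultimately show ?thesis by (rule plateaued_component_iff_walsh_square)
qed

lemma walsh_zero_square_cases:
  assumes "b \<noteq> 0"
  obtains "walsh n f b 0 = (- (2 ^ r)) ^ m" and "(walsh n f b 0)\<^sup>2 = 2 ^ n"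
  | "walsh n f b 0 = - (2 ^ r) * (- (2 ^ r)) ^ m" and "(walsh n f b 0)\<^sup>2 = 2 ^ (n + 2 * r)"
  using walsh_zero_cases[OF assms] square_neg_power_two by metis

lemma bent_component_iff:
  assumes "b \<noteq> 0"
  shows "bent_component n f b \<longleftrightarrow> walsh n f b 0 = (- (2 ^ r)) ^ m"
proof (cases rule: walsh_zero_square_cases[OF assms])
  case 1
  then show ?thesis
    by (simp add: bent_component_def walsh_zero_square_iff_plateaued[OF assms])
next
  case 2
  moreover have "(2::real) ^ (n + 2 * r) \<noteq> 2 ^ n" using r_pos by simp
  ultimately show ?thesis
    using square_neg_power_two(1)
    unfolding bent_component_def walsh_zero_square_iff_plateaued[OF assms] add_0_right by metis
qed

lemma plateaued_component_2r_iff: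
  assumes "b \<noteq> 0"
  shows "plateaued_component n f b (2 * r) \<longleftrightarrow> walsh n f b 0 = - (2 ^ r) * (- (2 ^ r)) ^ m"
proof (cases rule: walsh_zero_square_cases[OF assms])
  case 1
  moreover have "(2::real) ^ (n + 2 * r) \<noteq> 2 ^ n" using r_pos by simp
  ultimately show ?thesis
    using square_neg_power_two(2) unfolding walsh_zero_square_iff_plateaued[OF assms] by metis
next
  case 2
  then show ?thesis by (simp add: walsh_zero_square_iff_plateaued[OF assms])
qed

lemma card_two_walsh_values:
  shows "real (card {b \<in> UNIV - {0}. walsh n f b 0 = (- (2 ^ r)) ^ m})
      = 2 ^ r / (2 ^ r + 1) * (2 ^ n - 1)"
    and "real (card {b \<in> UNIV - {0}. walsh n f b 0 = - (2 ^ r) * (- (2 ^ r)) ^ m})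
      = (2 ^ n - 1) / (2 ^ r + 1)"
  using card_two_values_if_sum_eq_0[of "UNIV - {0}" "2 ^ r" "(- (2 ^ r)) ^ m" "\<lambda>b. walsh n f b 0"]
    walsh_zero_cases sum_walsh_zero_nonzero
  by (simp_all add: card_UNIV of_nat_diff)

lemma card_bent_components:
  "real (card {lam. lam \<noteq> 0 \<and> bent_component n f lam}) = 2 ^ r / (2 ^ r + 1) * (2 ^ n - 1)"
proof -
  have "{lam. lam \<noteq> 0 \<and> bent_component n f lam}
      = {b \<in> UNIV - {0}. walsh n f b 0 = (- (2 ^ r)) ^ m}"
    using bent_component_iff by auto
  with card_two_walsh_values(1) show ?thesis by simp
qed

lemma card_plateaued_2r_components:
  "real (card {lam. lam \<noteq> 0 \<and> plateaued_component n f lam (2 * r)}) = (2 ^ n - 1) / (2 ^ r + 1)"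
proof -
  have "{lam. lam \<noteq> 0 \<and> plateaued_component n f lam (2 * r)}
      = {b \<in> UNIV - {0}. walsh n f b 0 = - (2 ^ r) * (- (2 ^ r)) ^ m}"
    using plateaued_component_2r_iff by auto
  with card_two_walsh_values(2) show ?thesis by simp
qed

lemma walsh_zero_values:
  assumes "b \<noteq> 0"
  shows "walsh n f b 0 \<in> {(-1) ^ m * 2 ^ (r * m), (-1) ^ (m + 1) * 2 ^ (r * (m + 1))}"
proof -
  have neg_power: "(- (2 ^ r)) ^ k = (-1) ^ k * (2::real) ^ (r * k)" for k
    by (metis mult_minus1 power_mult power_mult_distrib)
  moreover have "- (2 ^ r) * (- (2 ^ r)) ^ m = (-1) ^ (m + 1) * (2::real) ^ (r * (m + 1))"
    using neg_power[of "m + 1"] by simp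
  ultimately show ?thesis using walsh_zero_cases[OF assms] by auto
qed

end

theorem theorem6p5:
  fixes f :: "'a::{field,finite} \<Rightarrow> 'a" and r m n :: nat
  assumes "r > 0" and "m > 0" and "n = 2 * r * m"
    and "card (UNIV :: 'a set) = 2 ^ n"
    and "almost_k_to_1 f (2 ^ r + 1)"
    and "componentwise_plateaued n f"
    and "f 0 = 0"
    and "card (f -` {0}) = 1"
  shows "real (card {lam. lam \<noteq> 0 \<and> bent_component n f lam})
           = (2 ^ r / (2 ^ r + 1)) * (2 ^ n - 1)
       \<and> real (card {lam. lam \<noteq> 0 \<and> plateaued_component n f lam (2 * r)})
           = (2 ^ n - 1) / (2 ^ r + 1)
       \<and> (\<forall>b. b \<noteq> 0 \<longrightarrow>
           walsh n f b 0 \<in> {(-1) ^ m * 2 ^ (r * m), (-1) ^ (m + 1) * 2 ^ (r * (m + 1))})"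
proof -
  interpret plateaued_almost_to_one f r m n
    using assms by unfold_locales
  show ?thesis
    using card_bent_components card_plateaued_2r_components walsh_zero_values by blast
qed

end
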